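(* Consider problem (VP) under the standing assumptions at $\bar x\in Q_0$. Let $\bar x$ be a local Geoffrion properly efficient solution of (VP) and suppose $L(Q;\bar x)\subset T(Q_0;\bar x)$, where $L(Q;\bar x):=\{v\in X: f_i^{\circ}(\bar x,v)\leqq0\ \forall i\in I,\ g_j^{\circ}(\bar x,v)\leqq0\ \forall j\in J(\bar x)\}$. Then there is no $u\in X$ such that $f_i^{\circ}(\bar x,u)\leqq0$ for all $i\in I$, $f_i^{\circ}(\bar x,u)<0$ for at least one $i\in I$, and $g_j^{\circ}(\bar x,u)\leqq 0$ for all $j\in J(\bar x)$.
   Context: Standing setting: $X$ is a Banach space; $I=\{1,\dots,p\}$, $J=\{1,\dots,m\}$; $f_i,g_j\colon X\to\mathbb{R}$; (VP) minimizes $f=(f_1,\dots,f_p)$ over $Q_0:=\{x\in X: g_j(x)\leqq 0,\ j\in J\}$. $J(\bar x):=\{j\in J: g_j(\bar x)=0\}$. Standing assumptions: $f_i$ ($i\in I$), $g_j$ ($j\in J(\bar x)$) locally Lipschitz at $\bar x$; $g_j$ ($j\notin J(\bar x)$) continuous at $\bar x$. $Q:=Q_0\cap\{x: f_i(x)\leqq f_i(\bar x),\ i\in I\}$. Clarke derivative: $F^{\circ}(\bar x,u):=\limsup_{x\to\bar x,\,t\downarrow0}\frac{F(x+tu)-F(x)}{t}$. Tangent cone: $T(\Omega;\bar x):=\{d:\exists t_k\downarrow0,\ \exists d^k\to d,\ \bar x+t_kd^k\in\Omega\ \forall k\}$. Local Geoffrion properly efficient solution: there is a neighborhood $U$ of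 $\bar x$ such that (a) no $x\in U\cap Q_0$ has $f(x)\leqq f(\bar x)$ componentwise with $f(x)\ne f(\bar x)$, and (b) there is $M>0$ such that for every $i\in I$ and every $x\in U\cap Q_0$ with $f_i(x)<f_i(\bar x)$ there exists $j\in I$ with $f_j(x)>f_j(\bar x)$ and $\frac{f_i(\bar x)-f_i(x)}{f_j(x)-f_j(\bar x)}\leqq M$. *)

theory Defs
  imports "HOL-Analysis.Analysis"
begin

definition clarke_dd :: "('a::real_normed_vector \<Rightarrow> real) \<Rightarrow> 'a \<Rightarrow> 'a \<Rightarrow> ereal" where
  "clarke_dd F xbar u =
     Limsup (at (xbar, 0) within (UNIV \<times> {0<..}))
       (\<lambda>(x, t). ereal ((F (x + t *\<^sub>R u) - F x) / t))"

definition locally_lipschitz_at :: "('a::metric_space \<Rightarrow> real) \<Rightarrow> 'a \<Rightarrow> bool" where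
  "locally_lipschitz_at F xbar \<longleftrightarrow>
     (\<exists>K \<delta>. \<delta> > 0 \<and> (\<forall>x\<in>ball xbar \<delta>. \<forall>y\<in>ball xbar \<delta>. \<bar>F x - F y\<bar> \<le> K * dist x y))"

definition tangent_cone :: "'a::real_normed_vector set \<Rightarrow> 'a \<Rightarrow> 'a set" where
  "tangent_cone \<Omega> xbar = {d. \<exists>t :: nat \<Rightarrow> real. \<exists>dk :: nat \<Rightarrow> 'a.
      (\<forall>k. t k > 0) \<and> t \<longlonglongrightarrow> 0 \<and> dk \<longlonglongrightarrow> d \<and> (\<forall>k. xbar + t k *\<^sub>R dk k \<in> \<Omega>)}"

definition feas :: "nat \<Rightarrow> (nat \<Rightarrow> 'a \<Rightarrow> real) \<Rightarrow> 'a set" where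
  "feas m g = {x. \<forall>j\<in>{1..m}. g j x \<le> 0}"

definition active :: "nat \<Rightarrow> (nat \<Rightarrow> 'a \<Rightarrow> real) \<Rightarrow> 'a \<Rightarrow> nat set" where
  "active m g xbar = {j\<in>{1..m}. g j xbar = 0}"

definition Qset :: "nat \<Rightarrow> (nat \<Rightarrow> 'a \<Rightarrow> real) \<Rightarrow> nat \<Rightarrow> (nat \<Rightarrow> 'a \<Rightarrow> real) \<Rightarrow> 'a \<Rightarrow> 'a set" where
  "Qset p f m g xbar = feas m g \<inter> {x. \<forall>i\<in>{1..p}. f i x \<le> f i xbar}"

definition linearizing_cone ::
  "nat \<Rightarrow> (nat \<Rightarrow> 'a::real_normed_vector \<Rightarrow> real) \<Rightarrow> nat \<Rightarrow> (nat \<Rightarrow> 'a \<Rightarrow> real) \<Rightarrow> 'a \<Rightarrow> 'a set" where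
  "linearizing_cone p f m g xbar = {v. (\<forall>i\<in>{1..p}. clarke_dd (f i) xbar v \<le> 0) \<and>
      (\<forall>j\<in>active m g xbar. clarke_dd (g j) xbar v \<le> 0)}"

definition local_geoffrion_proper ::
  "nat \<Rightarrow> (nat \<Rightarrow> 'a::topological_space \<Rightarrow> real) \<Rightarrow> nat \<Rightarrow> (nat \<Rightarrow> 'a \<Rightarrow> real) \<Rightarrow> 'a \<Rightarrow> bool" where
  "local_geoffrion_proper p f m g xbar \<longleftrightarrow>
     (\<exists>U. open U \<and> xbar \<in> U \<and>
        \<not> (\<exists>x\<in>U \<inter> feas m g. (\<forall>i\<in>{1..p}. f i x \<le> f i xbar) \<and> (\<exists>i\<in>{1..p}. f i x \<noteq> f i xbar)) \<and>
        (\<exists>M>0. \<forall>i\<in>{1..p}. \<forall>x\<in>U \<inter> feas m g. f i x < f i xbar \<longrightarrow>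
            (\<exists>j\<in>{1..p}. f j x > f j xbar \<and> (f i xbar - f i x) / (f j x - f j xbar) \<le> M)))"

end

theory Submission
  imports Defs
begin

text \<open>Take u as in the conclusion, with f_i0's Clarke derivative below -c < 0. Since u lies in
  L(Q; xbar), it is a tangent direction of Q0: there are feasible points xbar + t_k d_k with
  t_k \<down> 0 and d_k \<rightarrow> u. By local Lipschitz continuity the Clarke derivative bounds the first-order
  change of every f_i along this sequence, so f_i0 decreases by at least c t_k while every other
  objective increases by at most \<epsilon> t_k, for any \<epsilon> > 0. Taking \<epsilon> = c / M makes all trade-off
  ratios exceed the Geoffrion bound M.\<close>

lemma clarke_dd_less_imp_eventually:
  fixes F :: "'a::real_normed_vector \<Rightarrow> real"
  assumes "clarke_dd F xbar u < ereal a" and "\<forall>k. t k > 0" and "t \<longlonglongrightarrow> 0"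
  shows "\<forall>\<^sub>F k in sequentially. F (xbar + t k *\<^sub>R u) - F xbar < a * t k"
proof -
  let ?S = "UNIV \<times> {0<..} :: ('a \<times> real) set"
  have ev: "\<forall>\<^sub>F y in at (xbar, 0) within ?S.
      (\<lambda>(x, t). ereal ((F (x + t *\<^sub>R u) - F x) / t)) y < ereal a"
    using Limsup_lessD assms(1) unfolding clarke_dd_def by blast
  have lim: "filterlim (\<lambda>k. (xbar, t k)) (at (xbar, 0) within ?S) sequentially"
  proof (subst filterlim_at, intro conjI)
    show "\<forall>\<^sub>F k in sequentially. (xbar, t k) \<in> ?S \<and> (xbar, t k) \<noteq> (xbar, 0)"
      using assms(2) by (auto intro!: always_eventually) (metis less_irrefl)
    show "((\<lambda>k. (xbar, t k)) \<longlongrightarrow> (xbar, 0)) sequentially"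
      using assms(3) by (intro tendsto_Pair) auto
  qed
  have "\<forall>\<^sub>F k in sequentially. ereal ((F (xbar + t k *\<^sub>R u) - F xbar) / t k) < ereal a"
    using eventually_compose_filterlim[OF ev lim] by simp
  then show ?thesis
    by (rule eventually_mono) (use assms(2) in \<open>simp add: pos_divide_less_eq\<close>)
qed

lemma locally_lipschitz_at_nonneg:
  assumes "locally_lipschitz_at F xbar"
  obtains K \<delta> where "K \<ge> 0" "\<delta> > 0"
    "\<And>x y. x \<in> ball xbar \<delta> \<Longrightarrow> y \<in> ball xbar \<delta> \<Longrightarrow> \<bar>F x - F y\<bar> \<le> K * dist x y"
proof -
  obtain K \<delta> where "\<delta> > 0" and K: "\<forall>x\<in>ball xbar \<delta>. \<forall>y\<in>ball xbar \<delta>. \<bar>F x - F y\<bar> \<le> K * dist x y"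
    using assms unfolding locally_lipschitz_at_def by blast
  have "\<bar>F x - F y\<bar> \<le> \<bar>K\<bar> * dist x y" if "x \<in> ball xbar \<delta>" "y \<in> ball xbar \<delta>" for x y
    using K that mult_right_mono[OF abs_ge_self zero_le_dist] by (meson order_trans)
  with \<open>\<delta> > 0\<close> show thesis by (intro that[of "\<bar>K\<bar>" \<delta>]) auto
qed

lemma clarke_dd_less_imp_eventually_tangential:
  fixes F :: "'a::real_normed_vector \<Rightarrow> real"
  assumes "clarke_dd F xbar u < ereal a" and "\<forall>k. t k > 0" and "t \<longlonglongrightarrow> 0"
    and "d \<longlonglongrightarrow> u" and "locally_lipschitz_at F xbar"
  shows "\<forall>\<^sub>F k in sequentially. F (xbar + t k *\<^sub>R d k) - F xbar < a * t k"
proof -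
  obtain a' where a': "clarke_dd F xbar u < ereal a'" "a' < a"
    using ereal_dense2[OF assms(1)] by auto
  obtain K \<delta> where "K \<ge> 0" "\<delta> > 0"
    and lip: "\<And>x y. x \<in> ball xbar \<delta> \<Longrightarrow> y \<in> ball xbar \<delta> \<Longrightarrow> \<bar>F x - F y\<bar> \<le> K * dist x y"
    using locally_lipschitz_at_nonneg[OF assms(5)] by blast
  \<comment> \<open>The gap a - a' absorbs the Lipschitz error of replacing u by d_k.\<close>
  define \<eta> where "\<eta> = (a - a') / (K + 1)"
  have "\<eta> > 0" "K * \<eta> \<le> a - a'"
    using a'(2) \<open>K \<ge> 0\<close> unfolding \<eta>_def by (auto simp: field_simps)
  have to_xbar: "(\<lambda>k. xbar + t k *\<^sub>R v k) \<longlonglongrightarrow> xbar" if "v \<longlonglongrightarrow> w" for v w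
    using tendsto_add[OF tendsto_const tendsto_scaleR[OF assms(3) that]] by simp
  have "\<forall>\<^sub>F k in sequentially. F (xbar + t k *\<^sub>R u) - F xbar < a' * t k"
    using clarke_dd_less_imp_eventually[OF a'(1) assms(2,3)] .
  moreover have "\<forall>\<^sub>F k in sequentially. dist (d k) u < \<eta>"
    using assms(4) \<open>\<eta> > 0\<close> by (rule tendstoD)
  moreover have "\<forall>\<^sub>F k in sequentially. xbar + t k *\<^sub>R d k \<in> ball xbar \<delta>"
    using tendstoD[OF to_xbar[OF assms(4)] \<open>\<delta> > 0\<close>] by (simp add: dist_commute)
  moreover have "\<forall>\<^sub>F k in sequentially. xbar + t k *\<^sub>R u \<in> ball xbar \<delta>"
    using tendstoD[OF to_xbar[OF tendsto_const] \<open>\<delta> > 0\<close>] by (simp add: dist_commute)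
  ultimately show ?thesis
  proof eventually_elim
    case (elim k)
    have "t k > 0" using assms(2) by simp
    have "\<bar>F (xbar + t k *\<^sub>R d k) - F (xbar + t k *\<^sub>R u)\<bar>
        \<le> K * dist (xbar + t k *\<^sub>R d k) (xbar + t k *\<^sub>R u)"
      using lip elim(3,4) by blast
    also have "\<dots> = K * (t k * dist (d k) u)"
      using \<open>t k > 0\<close> by (simp add: dist_norm flip: scaleR_diff_right)
    also have "\<dots> \<le> K * \<eta> * t k"
      using mult_left_mono[OF less_imp_le[OF elim(2)], of "K * t k"] \<open>t k > 0\<close> \<open>K \<ge> 0\<close>
      by (simp add: algebra_simps)
    also have "\<dots> \<le> (a - a') * t k"
      using \<open>K * \<eta> \<le> a - a'\<close> \<open>t k > 0\<close> by (simp add: mult_right_mono)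
    finally show ?case using elim(1) by (simp add: algebra_simps)
  qed
qed

lemma local_geoffrion_proper_no_first_order_tradeoff:
  assumes "local_geoffrion_proper p f m g xbar"
    and "x \<longlonglongrightarrow> xbar" and "\<forall>k. x k \<in> feas m g" and "\<forall>k. t k > 0"
    and "i0 \<in> {1..p}" and "c > 0"
    and decrease: "\<forall>\<^sub>F k in sequentially. f i0 (x k) - f i0 xbar < - c * t k"
    and small_increase: "\<And>j \<epsilon>. j \<in> {1..p} \<Longrightarrow> \<epsilon> > 0 \<Longrightarrow>
        \<forall>\<^sub>F k in sequentially. f j (x k) - f j xbar < \<epsilon> * t k"
  shows False
proof -
  obtain U M where "open U" "xbar \<in> U" "M > 0"
    and bound: "\<forall>i\<in>{1..p}. \<forall>y\<in>U \<inter> feas m g. f i y < f i xbar \<longrightarrow>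
        (\<exists>j\<in>{1..p}. f j y > f j xbar \<and> (f i xbar - f i y) / (f j y - f j xbar) \<le> M)"
    using assms(1) unfolding local_geoffrion_proper_def by blast
  have "\<forall>\<^sub>F k in sequentially. \<forall>j\<in>{1..p}. f j (x k) - f j xbar < c / M * t k"
  proof (intro eventually_ball_finite ballI)
    show "\<forall>\<^sub>F k in sequentially. f j (x k) - f j xbar < c / M * t k" if "j \<in> {1..p}" for j
      using small_increase[OF that, of "c / M"] \<open>c > 0\<close> \<open>M > 0\<close> by simp
  qed simp
  moreover have "\<forall>\<^sub>F k in sequentially. x k \<in> U"
    using topological_tendstoD[OF assms(2) \<open>open U\<close> \<open>xbar \<in> U\<close>] .
  ultimately have "\<forall>\<^sub>F k in sequentially. False"
    using decrease
  proof eventually_elim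
    case (elim k)
    have "c * t k > 0" using assms(4) \<open>c > 0\<close> by simp
    then have "f i0 (x k) < f i0 xbar" using elim(3) by simp
    then obtain j where "j \<in> {1..p}" "f j (x k) > f j xbar"
      "(f i0 xbar - f i0 (x k)) / (f j (x k) - f j xbar) \<le> M"
      using bound \<open>i0 \<in> {1..p}\<close> elim(2) assms(3) by blast
    then have "f i0 xbar - f i0 (x k) \<le> M * (f j (x k) - f j xbar)"
      by (simp add: pos_divide_le_eq mult.commute)
    also have "\<dots> < M * (c / M * t k)"
      using elim(1) \<open>j \<in> {1..p}\<close> \<open>M > 0\<close> by (intro mult_strict_left_mono) auto
    also have "\<dots> = c * t k" using \<open>M > 0\<close> by simp
    finally show False using elim(3) by simp
  qed
  then show False by simp
qed

theorem corollary5p3: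
  fixes p m :: nat and f g :: "nat \<Rightarrow> 'a::banach \<Rightarrow> real" and xbar :: 'a
  assumes "xbar \<in> feas m g"
    and "\<forall>i\<in>{1..p}. locally_lipschitz_at (f i) xbar"
    and "\<forall>j\<in>active m g xbar. locally_lipschitz_at (g j) xbar"
    and "\<forall>j\<in>{1..m} - active m g xbar. isCont (g j) xbar"
    and "local_geoffrion_proper p f m g xbar"
    and "linearizing_cone p f m g xbar \<subseteq> tangent_cone (feas m g) xbar"
  shows "\<not> (\<exists>u. (\<forall>i\<in>{1..p}. clarke_dd (f i) xbar u \<le> 0) \<and>
              (\<exists>i\<in>{1..p}. clarke_dd (f i) xbar u < 0) \<and>
              (\<forall>j\<in>active m g xbar. clarke_dd (g j) xbar u \<le> 0))"
proof
  assume "\<exists>u. (\<forall>i\<in>{1..p}. clarke_dd (f i) xbar u \<le> 0) \<and>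
              (\<exists>i\<in>{1..p}. clarke_dd (f i) xbar u < 0) \<and>
              (\<forall>j\<in>active m g xbar. clarke_dd (g j) xbar u \<le> 0)"
  then obtain u i0 where nonpos: "\<forall>i\<in>{1..p}. clarke_dd (f i) xbar u \<le> 0"
    and "i0 \<in> {1..p}" "clarke_dd (f i0) xbar u < 0"
    and "\<forall>j\<in>active m g xbar. clarke_dd (g j) xbar u \<le> 0" by blast
  then have "u \<in> tangent_cone (feas m g) xbar"
    using assms(6) unfolding linearizing_cone_def by blast
  then obtain t :: "nat \<Rightarrow> real" and d :: "nat \<Rightarrow> 'a" where t: "\<forall>k. t k > 0" "t \<longlonglongrightarrow> 0"
    and "d \<longlonglongrightarrow> u" and feasible: "\<forall>k. xbar + t k *\<^sub>R d k \<in> feas m g"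
    unfolding tangent_cone_def by blast
  have "(\<lambda>k. xbar + t k *\<^sub>R d k) \<longlonglongrightarrow> xbar"
    using tendsto_add[OF tendsto_const tendsto_scaleR[OF t(2) \<open>d \<longlonglongrightarrow> u\<close>]] by simp
  have along: "\<forall>\<^sub>F k in sequentially. f i (xbar + t k *\<^sub>R d k) - f i xbar < a * t k"
    if "i \<in> {1..p}" "clarke_dd (f i) xbar u < ereal a" for i a
    using clarke_dd_less_imp_eventually_tangential[OF that(2) t \<open>d \<longlonglongrightarrow> u\<close>] assms(2) that(1)
    by blast
  obtain c where "clarke_dd (f i0) xbar u < ereal (- c)" "c > 0"
  proof -
    obtain a where "clarke_dd (f i0) xbar u < ereal a" "a < 0"
      using ereal_dense2[OF \<open>clarke_dd (f i0) xbar u < 0\<close>] by auto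
    then show thesis using that[of "- a"] by simp
  qed
  show False
  proof (rule local_geoffrion_proper_no_first_order_tradeoff
      [OF assms(5) \<open>_ \<longlonglongrightarrow> xbar\<close> feasible t(1) \<open>i0 \<in> {1..p}\<close> \<open>c > 0\<close>])
    show "\<forall>\<^sub>F k in sequentially. f i0 (xbar + t k *\<^sub>R d k) - f i0 xbar < - c * t k"
      using along \<open>i0 \<in> {1..p}\<close> \<open>clarke_dd (f i0) xbar u < ereal (- c)\<close> by blast
    show "\<forall>\<^sub>F k in sequentially. f j (xbar + t k *\<^sub>R d k) - f j xbar < \<epsilon> * t k"
      if "j \<in> {1..p}" "\<epsilon> > 0" for j \<epsilon>
      using along[OF that(1)] nonpos that by (meson ereal_less(2) order.strict_trans1)
  qed
qed

end
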